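(* For every integer $M\ge0$, the poset $(\mathrm{RL},\le_{RL})$ is noetherian: it contains no infinite antichain.
   Context: Fix an integer $M\ge0$. A reading list of type $(d,n)$ is a tuple $S=(S^1,\dots,S^n)$ of $d$-element subsets of $[Md]=\{1,\dots,Md\}$ (each $S^i$ viewed as an increasing word). $\mathrm{RL}$ denotes the set of all reading lists of all types. For $S=(S^1,\dots,S^n)$ of type $(d,n)$ and $T=(T^1,\dots,T^m)$ of type $(e,m)$, define $S\le_{RL}T$ iff there exist indices $1\le k_1<k_2<\cdots<k_n\le m$ and maps $f_i:S^i\to T^{k_i}$ ($i=1,\dots,n$), each strictly increasing, such that $f_i(x)=f_j(x)$ for all $i,j$ and all $x\in S^i\cap S^j$. An antichain is a sequence of pairwise incomparable elements. *)

theory Defs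
  imports Main
begin

definition reading_list_of_type :: "nat \<Rightarrow> nat \<Rightarrow> nat \<Rightarrow> nat set list \<Rightarrow> bool" where
  "reading_list_of_type M d n S \<longleftrightarrow>
     length S = n \<and> (\<forall>A \<in> set S. A \<subseteq> {1..M*d} \<and> card A = d)"

definition RL :: "nat \<Rightarrow> nat set list set" where
  "RL M = {S. \<exists>d n. reading_list_of_type M d n S}"

text \<open>The order S \<le>_RL T (indices are 0-based here).\<close>
definition rl_le :: "nat set list \<Rightarrow> nat set list \<Rightarrow> bool" where
  "rl_le S T \<longleftrightarrow>
     (\<exists>k :: nat \<Rightarrow> nat. \<exists>f :: nat \<Rightarrow> nat \<Rightarrow> nat.
        (\<forall>i j. i < j \<and> j < length S \<longrightarrow> k i < k j) \<and>
        (\<forall>i < length S. k i < length T) \<and>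
        (\<forall>i < length S. strict_mono_on (S ! i) (f i) \<and> f i ` (S ! i) \<subseteq> T ! (k i)) \<and>
        (\<forall>i < length S. \<forall>j < length S. \<forall>x \<in> S ! i \<inter> S ! j. f i x = f j x))"

end

theory Submission
  imports Defs "HOL-Library.Sublist" "HOL-Library.Infinite_Set"
begin

text \<open>Let a be an antichain. If infinitely many a i have the same length N, transpose them: the
  column word of a reading list records, for every ground element, the set of rows containing it,
  so it is a word over the finite alphabet of subsets of the N row indices, and a subword embedding
  of column words is an embedding of reading lists that fixes the rows. If infinitely many a i have
  the same row size d, they are themselves words over the finite alphabet of subsets of [Md]. In
  both cases Higman's lemma (proved by Nash-Williams' minimal bad sequence argument) produces a
  comparable pair. Otherwise both the lengths and the row sizes of the a i are unbounded; then a 0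
  embeds into some long and wide a j: iterated pigeonholing finds a set X of L = M card (hd (a 0))
  elements common to at least length (a j) / (2M)^L rows of a j, and x \<mapsto> (x-th element of X)
  maps every row of a 0 order-preservingly into each of these rows.\<close>

lemma list_emb_index_map:
  assumes "list_emb P xs ys"
  shows "\<exists>g. (\<forall>i j. i < j \<and> j < length xs \<longrightarrow> g i < g j) \<and>
             (\<forall>i < length xs. g i < length ys \<and> P (xs ! i) (ys ! g i))"
  using assms
proof induction
  case (list_emb_Nil ys)
  show ?case by simp
next
  case (list_emb_Cons xs ys y)
  then obtain g where "\<forall>i j. i < j \<and> j < length xs \<longrightarrow> g i < g j"
    and "\<forall>i < length xs. g i < length ys \<and> P (xs ! i) (ys ! g i)" by blast
  then show ?case by (intro exI[of _ "Suc \<circ> g"]) auto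
next
  case (list_emb_Cons2 x y xs ys)
  then obtain g where "\<forall>i j. i < j \<and> j < length xs \<longrightarrow> g i < g j"
    and "\<forall>i < length xs. g i < length ys \<and> P (xs ! i) (ys ! g i)" by blast
  with \<open>P x y\<close> show ?case
    by (intro exI[of _ "case_nat 0 (Suc \<circ> g)"]) (auto simp: nth_Cons split: nat.splits)
qed

definition bad_seq :: "'a set \<Rightarrow> (nat \<Rightarrow> 'a list) \<Rightarrow> bool" where
  "bad_seq A w \<longleftrightarrow> (\<forall>i. set (w i) \<subseteq> A) \<and> (\<forall>i j. i < j \<longrightarrow> \<not> subseq (w i) (w j))"

primrec prefix_by :: "('a list \<Rightarrow> 'a) \<Rightarrow> nat \<Rightarrow> 'a list" where
  "prefix_by ch 0 = []"
| "prefix_by ch (Suc n) = prefix_by ch n @ [ch (prefix_by ch n)]"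

lemma length_prefix_by [simp]: "length (prefix_by ch n) = n"
  by (induction n) auto

lemma nth_prefix_by: "i < n \<Longrightarrow> prefix_by ch n ! i = ch (prefix_by ch i)"
  by (induction n) (auto simp: nth_append less_Suc_eq)

lemma minimal_bad_seq:
  assumes "bad_seq A w"
  obtains m where "bad_seq A m"
    and "\<And>n w. bad_seq A w \<Longrightarrow> \<forall>i<n. w i = m i \<Longrightarrow> length (m n) \<le> length (w n)"
proof -
  define extends where
    "extends p x \<longleftrightarrow> (\<exists>w. bad_seq A w \<and> (\<forall>i<length p. w i = p ! i) \<and> w (length p) = x)"
    for p x
  define ch where "ch p = arg_min length (extends p)" for p
  define m where "m i = ch (prefix_by ch i)" for i
  have extends_m: "extends (prefix_by ch n) (w n)" if "bad_seq A w" "\<forall>i<n. w i = m i" for n w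
    unfolding extends_def using that by (intro exI[of _ w]) (simp add: nth_prefix_by m_def)
  have "\<exists>w. bad_seq A w \<and> (\<forall>i<n. w i = m i)" for n
  proof (induction n)
    case 0
    show ?case using assms by blast
  next
    case (Suc n)
    then obtain w where "bad_seq A w" "\<forall>i<n. w i = m i" by blast
    then have "extends (prefix_by ch n) (w n)" by (rule extends_m)
    then have "extends (prefix_by ch n) (m n)"
      unfolding m_def ch_def by (rule arg_min_nat_lemma[THEN conjunct1])
    then obtain w' where "bad_seq A w'" "\<forall>i<n. w' i = prefix_by ch n ! i" "w' n = m n"
      unfolding extends_def by auto
    then have "bad_seq A w' \<and> (\<forall>i<Suc n. w' i = m i)"
      by (simp add: nth_prefix_by m_def less_Suc_eq)
    then show ?case by blast
  qed
  then have agree: "\<exists>w. bad_seq A w \<and> w i = m i \<and> w j = m j" if "i \<le> j" for i j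
    using that by (metis le_imp_less_Suc lessI)
  have "bad_seq A m"
    unfolding bad_seq_def
  proof (intro conjI allI impI)
    fix i
    from agree[of i i] show "set (m i) \<subseteq> A" by (metis bad_seq_def order.refl)
  next
    fix i j :: nat
    assume "i < j"
    with agree[of i j] show "\<not> subseq (m i) (m j)" by (metis bad_seq_def order.strict_implies_order)
  qed
  moreover have "length (m n) \<le> length (w n)" if "bad_seq A w" "\<forall>i<n. w i = m i" for n w
    using arg_min_nat_le[where P="extends (prefix_by ch n)", OF extends_m[OF that]]
    by (simp add: m_def ch_def)
  ultimately show thesis by (rule that)
qed

lemma bad_seq_splice_tails:
  assumes bad: "bad_seq A m" and "strict_mono \<phi>"
    and heads: "\<And>k. m (\<phi> k) = a # tl (m (\<phi> k))"
  shows "bad_seq A (\<lambda>k. if k < \<phi> 0 then m k else tl (m (\<phi> (k - \<phi> 0))))"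
    (is "bad_seq A ?w")
  unfolding bad_seq_def
proof (intro conjI allI impI)
  fix i
  have "set (tl (m (\<phi> k))) \<subseteq> set (m (\<phi> k))" for k
    by (subst (2) heads) auto
  with bad show "set (?w i) \<subseteq> A" by (auto simp: bad_seq_def)
next
  fix i j :: nat
  assume "i < j"
  have bad_m: "\<not> subseq (m i) (m j)" if "i < j" for i j
    using bad that by (simp add: bad_seq_def)
  consider "j < \<phi> 0" | "i < \<phi> 0" "\<phi> 0 \<le> j" | "\<phi> 0 \<le> i"
    using \<open>i < j\<close> by linarith
  then show "\<not> subseq (?w i) (?w j)"
  proof cases
    case 1
    with \<open>i < j\<close> bad_m show ?thesis by simp
  next
    case 2
    have "i < \<phi> (j - \<phi> 0)"
      using 2 \<open>strict_mono \<phi>\<close> strict_mono_less_eq[of \<phi> 0 "j - \<phi> 0"] by simp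
    with 2 bad_m heads[of "j - \<phi> 0"] show ?thesis by (auto dest: list_emb_Cons[of _ _ _ a])
  next
    case 3
    have "\<phi> (i - \<phi> 0) < \<phi> (j - \<phi> 0)"
      using 3 \<open>i < j\<close> \<open>strict_mono \<phi>\<close> by (simp add: strict_mono_less)
    show ?thesis
    proof
      assume "subseq (?w i) (?w j)"
      with 3 \<open>i < j\<close> have "subseq (a # tl (m (\<phi> (i - \<phi> 0)))) (a # tl (m (\<phi> (j - \<phi> 0))))"
        by simp
      then have "subseq (m (\<phi> (i - \<phi> 0))) (m (\<phi> (j - \<phi> 0)))"
        by (simp only: heads[symmetric])
      with bad_m \<open>\<phi> (i - \<phi> 0) < \<phi> (j - \<phi> 0)\<close> show False by blast
    qed
  qed
qed

theorem higman:
  fixes w :: "nat \<Rightarrow> 'a list"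
  assumes "finite A" "\<And>i. set (w i) \<subseteq> A"
  shows "\<exists>i j. i < j \<and> subseq (w i) (w j)"
proof (rule ccontr)
  assume "\<not> ?thesis"
  with assms(2) have "bad_seq A w" by (simp add: bad_seq_def)
  then obtain m where bad: "bad_seq A m"
    and minimal: "\<And>n v. bad_seq A v \<Longrightarrow> \<forall>i<n. v i = m i \<Longrightarrow> length (m n) \<le> length (v n)"
    using minimal_bad_seq by blast
  have nonempty: "m i \<noteq> []" for i
  proof
    assume "m i = []"
    then have "subseq (m i) (m (Suc i))" by simp
    with bad show False by (simp add: bad_seq_def)
  qed
  have "hd (m i) \<in> A" for i
    using bad nonempty[of i] hd_in_set[of "m i"] unfolding bad_seq_def by blast
  then have "finite (range (\<lambda>i. hd (m i)))"
    using \<open>finite A\<close> finite_subset[of "range (\<lambda>i. hd (m i))" A] by blast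
  then obtain a where "infinite {i. hd (m i) = a}"
    by (rule inf_img_fin_domE) (auto simp: vimage_def)
  then obtain \<phi> :: "nat \<Rightarrow> nat" where "strict_mono \<phi>" and heads: "\<And>k. hd (m (\<phi> k)) = a"
    using infinite_enumerate[of "{i. hd (m i) = a}"] by auto
  have "m (\<phi> k) = a # tl (m (\<phi> k))" for k
    using nonempty[of "\<phi> k"] heads[of k] list.collapse[of "m (\<phi> k)"] by simp
  with bad \<open>strict_mono \<phi>\<close>
  have "bad_seq A (\<lambda>k. if k < \<phi> 0 then m k else tl (m (\<phi> (k - \<phi> 0))))"
    by (rule bad_seq_splice_tails)
  \<comment> \<open>it agrees with m below \<phi> 0 but is shorter at \<phi> 0\<close>
  from minimal[OF this, of "\<phi> 0"] nonempty[of "\<phi> 0"] show False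
    by (cases "m (\<phi> 0)") simp_all
qed

corollary higman_on:
  fixes w :: "nat \<Rightarrow> 'a list"
  assumes "finite A" "infinite I" "\<And>i. i \<in> I \<Longrightarrow> set (w i) \<subseteq> A"
  shows "\<exists>i\<in>I. \<exists>j\<in>I. i < j \<and> subseq (w i) (w j)"
proof -
  obtain r :: "nat \<Rightarrow> nat" where r: "strict_mono r" "\<And>n. r n \<in> I"
    using infinite_enumerate[OF \<open>infinite I\<close>] by auto
  have "set ((w \<circ> r) n) \<subseteq> A" for n
    using assms(3) r(2) by simp
  with \<open>finite A\<close> obtain p q where "p < q" "subseq (w (r p)) (w (r q))"
    using higman[of A "w \<circ> r"] by auto
  with r show ?thesis
    using strict_mono_less[OF r(1)] by blast
qed

lemma rl_le_Nil: "rl_le [] T"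
  by (simp add: rl_le_def)

lemma rl_le_if_subseq:
  assumes "subseq S T"
  shows "rl_le S T"
proof -
  obtain k where "\<forall>i j. i < j \<and> j < length S \<longrightarrow> k i < k j"
    and "\<forall>i < length S. k i < length T \<and> S ! i = T ! k i"
    using list_emb_index_map[OF assms] by blast
  then show ?thesis
    unfolding rl_le_def by (intro exI[of _ k] exI[of _ "\<lambda>i x. x"]) (simp add: strict_mono_on_def)
qed

text \<open>The transpose of a reading list: letter x records the rows containing x + 1 (rows are
  0-based, ground elements 1-based).\<close>

definition column_word :: "nat \<Rightarrow> nat set list \<Rightarrow> nat set list" where
  "column_word L S = map (\<lambda>x. {r. r < length S \<and> x \<in> S ! r}) [1..<Suc L]"

lemma length_column_word [simp]: "length (column_word L S) = L"
  by (simp add: column_word_def)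

lemma nth_column_word: "x < L \<Longrightarrow> column_word L S ! x = {r. r < length S \<and> Suc x \<in> S ! r}"
  by (simp add: column_word_def del: upt_Suc)

lemma set_column_word: "set (column_word L S) \<subseteq> Pow {..<length S}"
  by (auto simp: column_word_def)

lemma rl_le_if_subseq_column_word:
  assumes "length S = length T" "\<forall>A\<in>set S. A \<subseteq> {1..L}"
    and "subseq (column_word L S) (column_word L' T)"
  shows "rl_le S T"
proof -
  obtain g where mono: "\<forall>x y. x < y \<and> y < L \<longrightarrow> g x < g y"
    and cols: "\<forall>x<L. g x < L' \<and> column_word L S ! x = column_word L' T ! g x"
    using list_emb_index_map[OF assms(3)] by auto
  have range: "1 \<le> x \<and> x \<le> L" if "i < length S" "x \<in> S ! i" for i x
    using assms(2) that nth_mem by fastforce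
  define f where "f x = Suc (g (x - 1))" for x
  have "strict_mono_on (S ! i) f" if "i < length S" for i
  proof (rule strict_mono_onI)
    fix x y assume "x \<in> S ! i" "y \<in> S ! i" "x < y"
    with range[OF that] have "x - 1 < y - 1" "y - 1 < L" by force+
    with mono show "f x < f y" by (simp add: f_def)
  qed
  moreover have "f x \<in> T ! i" if "i < length S" "x \<in> S ! i" for i x
  proof -
    have x: "x - 1 < L" "Suc (x - 1) = x"
      using range[OF that] by auto
    then have "i \<in> column_word L S ! (x - 1)"
      using that nth_column_word[of "x - 1" L S] by simp
    then show ?thesis
      using x cols nth_column_word[of "g (x - 1)" L' T] assms(1) by (simp add: f_def)
  qed
  ultimately show ?thesis
    unfolding rl_le_def using assms(1)
    by (intro exI[of _ "\<lambda>i. i"] exI[of _ "\<lambda>i. f"]) auto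
qed

lemma rl_le_if_common_subset:
  assumes "\<forall>A\<in>set S. A \<subseteq> {1..card X}" "finite X" "finite R" "R \<subseteq> {..<length T}"
    and "length S \<le> card R" "\<forall>r\<in>R. X \<subseteq> T ! r"
  shows "rl_le S T"
proof -
  define ks where "ks = sorted_list_of_set R"
  define xs where "xs = sorted_list_of_set X"
  have ks: "sorted_wrt (<) ks" "set ks = R" "length ks = card R"
    using assms(3) by (auto simp: ks_def)
  have xs: "sorted_wrt (<) xs" "set xs = X" "length xs = card X"
    using assms(2) by (auto simp: xs_def)
  have range: "1 \<le> x \<and> x \<le> length xs" if "i < length S" "x \<in> S ! i" for i x
    using assms(1) that nth_mem xs(3) by fastforce
  have k_in: "ks ! i \<in> R" if "i < length S" for i
    using ks(2,3) assms(5) that nth_mem[of i ks] by simp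
  have "ks ! i < ks ! j" if "i < j" "j < length S" for i j
    using ks(1,3) assms(5) that sorted_wrt_nth_less[of "(<)" ks i j] by simp
  moreover have "strict_mono_on (S ! i) (\<lambda>x. xs ! (x - 1))" if "i < length S" for i
  proof (rule strict_mono_onI)
    fix x y assume "x \<in> S ! i" "y \<in> S ! i" "x < y"
    with range[OF that] have "x - 1 < y - 1" "y - 1 < length xs" by force+
    with xs(1) show "xs ! (x - 1) < xs ! (y - 1)" by (simp add: sorted_wrt_nth_less)
  qed
  moreover have "xs ! (x - 1) \<in> T ! (ks ! i)" if "i < length S" "x \<in> S ! i" for i x
  proof -
    have "x - 1 < length xs" using range[OF that] by auto
    then show ?thesis using xs(2) nth_mem assms(6) k_in[OF that(1)] by blast
  qed
  ultimately show ?thesis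
    unfolding rl_le_def using k_in assms(4)
    by (intro exI[of _ "\<lambda>i. ks ! i"] exI[of _ "\<lambda>i x. xs ! (x - 1)"]) blast
qed

lemma double_counting_frequent_element:
  assumes "finite R" "R \<noteq> {}" "finite U" "0 < k"
    and "\<And>r. r \<in> R \<Longrightarrow> B r \<subseteq> U \<and> k \<le> card (B r)"
  shows "\<exists>c\<in>U. card R * k \<le> card U * card {r\<in>R. c \<in> B r}"
proof -
  define count where "count c = card {r\<in>R. c \<in> B r}" for c
  obtain r where "r \<in> R" using assms(2) by blast
  with assms(4,5) have "U \<noteq> {}" by fastforce
  then obtain c where "c \<in> U" and c: "Max (count ` U) = count c"
    by (rule obtains_MAX[OF assms(3)])
  have "card R * k \<le> (\<Sum>r\<in>R. card (B r))"
    using sum_bounded_below[of R k "\<lambda>r. card (B r)"] assms(5) by simp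
  also have "\<dots> = (\<Sum>r\<in>R. card {c\<in>U. c \<in> B r})"
    using assms(5) by (intro sum.cong refl arg_cong[where f = card]) blast
  also have "\<dots> = (\<Sum>c\<in>U. count c)"
    using sum.swap_restrict[OF assms(1,3), of "\<lambda>_ _. 1::nat" "\<lambda>r c. c \<in> B r"]
    by (simp add: count_def)
  also have "\<dots> \<le> card U * count c"
    using sum_le_card_Max[OF assms(3), of count] c by simp
  finally show ?thesis using \<open>c \<in> U\<close> by (auto simp: count_def)
qed

text \<open>As long as 2 card X \<le> e, every row still has at least e / 2 elements outside X, so by
  double counting some new element lies in at least a 1 / (2M) fraction of the current rows.\<close>

lemma common_subset_of_many_sets:
  assumes "finite I" "I \<noteq> {}" "finite U" "card U \<le> M * e" "2 * L \<le> e"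
    and "\<And>i. i \<in> I \<Longrightarrow> B i \<subseteq> U \<and> card (B i) = e"
  shows "\<exists>X R. X \<subseteq> U \<and> card X = L \<and> R \<subseteq> I \<and> card I \<le> card R * (2 * M) ^ L \<and>
           (\<forall>r\<in>R. X \<subseteq> B r)"
  using assms(5)
proof (induction L)
  case 0
  show ?case by (intro exI[of _ "{}"] exI[of _ I]) simp
next
  case (Suc L)
  then obtain X R where X: "X \<subseteq> U" "card X = L" and R: "R \<subseteq> I" "\<forall>r\<in>R. X \<subseteq> B r"
    and bound: "card I \<le> card R * (2 * M) ^ L"
    by auto
  have "finite R" using R(1) assms(1) finite_subset by blast
  have "card I > 0" using assms(1,2) by (simp add: card_gt_0_iff)
  with bound have "R \<noteq> {}" by (cases "R = {}") auto
  have "finite X" using X(1) assms(3) finite_subset by blast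
  have rest: "B r - X \<subseteq> U - X \<and> e - L \<le> card (B r - X)" if "r \<in> R" for r
  proof -
    have "B r \<subseteq> U" "card (B r) = e" "X \<subseteq> B r"
      using assms(6)[of r] R that by auto
    then show ?thesis using X \<open>finite X\<close> by (auto simp: card_Diff_subset)
  qed
  obtain c where c: "c \<in> U - X"
    and many: "card R * (e - L) \<le> card (U - X) * card {r\<in>R. c \<in> B r - X}"
    using double_counting_frequent_element[of R "U - X" "e - L" "\<lambda>r. B r - X"]
      \<open>finite R\<close> \<open>R \<noteq> {}\<close> rest assms(3) Suc.prems by auto
  define R' where "R' = {r\<in>R. c \<in> B r}"
  have R'_eq: "{r\<in>R. c \<in> B r - X} = R'" using c by (auto simp: R'_def)
  have "e \<le> 2 * (e - L)" using Suc.prems by simp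
  then have "M * e \<le> 2 * M * (e - L)"
    using mult_le_mono2[of e "2 * (e - L)" M] by (simp add: mult.left_commute)
  moreover have "card (U - X) \<le> card U"
    using assms(3) by (simp add: card_mono)
  ultimately have "card (U - X) \<le> 2 * M * (e - L)"
    using assms(4) by linarith
  have "card R * (e - L) \<le> card (U - X) * card R'"
    using many unfolding R'_eq .
  also have "\<dots> \<le> 2 * M * (e - L) * card R'"
    using \<open>card (U - X) \<le> 2 * M * (e - L)\<close> by (rule mult_le_mono1)
  also have "\<dots> = (2 * M * card R') * (e - L)"
    by (simp add: ac_simps)
  finally have "card R * (e - L) \<le> (2 * M * card R') * (e - L)" .
  then have "card R \<le> 2 * M * card R'"
    using Suc.prems by simp
  have "card I \<le> card R * (2 * M) ^ L"
    by (fact bound)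
  also have "\<dots> \<le> 2 * M * card R' * (2 * M) ^ L"
    using \<open>card R \<le> 2 * M * card R'\<close> by (rule mult_le_mono1)
  also have "\<dots> = card R' * (2 * M) ^ Suc L"
    by (simp add: ac_simps)
  finally have "card I \<le> card R' * (2 * M) ^ Suc L" .
  moreover have "insert c X \<subseteq> U" "card (insert c X) = Suc L"
    using c X \<open>finite X\<close> by auto
  moreover have "R' \<subseteq> I" "\<forall>r\<in>R'. insert c X \<subseteq> B r"
    using R by (auto simp: R'_def)
  ultimately show ?case by blast
qed

lemma RL_rows:
  assumes "S \<in> RL M" "A \<in> set S"
  shows "A \<subseteq> {1..M * card (hd S)} \<and> card A = card (hd S)"
proof -
  obtain d n where "reading_list_of_type M d n S"
    using assms(1) by (auto simp: RL_def)
  then have rows: "\<forall>A\<in>set S. A \<subseteq> {1..M * d} \<and> card A = d"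
    by (simp add: reading_list_of_type_def)
  moreover have "hd S \<in> set S"
    using assms(2) by (cases S) auto
  ultimately show ?thesis using assms(2) by simp
qed

lemma rl_le_if_long_and_wide:
  assumes "S \<in> RL M" "T \<in> RL M"
    and wide: "2 * (M * card (hd S)) \<le> card (hd T)"
    and long: "length S * (2 * M) ^ (M * card (hd S)) \<le> length T"
  shows "rl_le S T"
proof (cases "S = []")
  case True
  then show ?thesis by (simp add: rl_le_Nil)
next
  case False
  define L where "L = M * card (hd S)"
  have "(2 * M) ^ L > 0"
    by (cases "M = 0") (simp_all add: L_def)
  then have "length S * 1 \<le> length S * (2 * M) ^ L"
    by (intro mult_le_mono2) (simp add: Suc_le_eq)
  then have "length S \<le> length T"
    using long unfolding L_def[symmetric] by linarith
  with False have "0 \<in> {..<length T}" by (cases S) auto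
  then have "{..<length T} \<noteq> {}" by blast
  have rows_T: "nth T r \<subseteq> {1..M * card (hd T)} \<and> card (nth T r) = card (hd T)"
    if "r \<in> {..<length T}" for r
    using that RL_rows[OF \<open>T \<in> RL M\<close>] by simp
  obtain X R where X: "X \<subseteq> {1..M * card (hd T)}" "card X = L"
    and R: "R \<subseteq> {..<length T}" "length T \<le> card R * (2 * M) ^ L" "\<forall>r\<in>R. X \<subseteq> T ! r"
    using common_subset_of_many_sets[of "{..<length T}" "{1..M * card (hd T)}" M "card (hd T)" L "nth T",
        OF _ _ _ _ _ rows_T] \<open>{..<length T} \<noteq> {}\<close> wide
    unfolding L_def[symmetric] by auto
  have "length S * (2 * M) ^ L \<le> card R * (2 * M) ^ L"
    using long R(2) unfolding L_def[symmetric] by linarith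
  with \<open>(2 * M) ^ L > 0\<close> have "length S \<le> card R"
    by (simp only: mult_le_cancel2)
  moreover have "\<forall>A\<in>set S. A \<subseteq> {1..card X}"
    using RL_rows[OF \<open>S \<in> RL M\<close>] X(2) by (simp add: L_def)
  moreover have "finite X" "finite R"
    using X(1) R(1) finite_subset by blast+
  ultimately show ?thesis
    using rl_le_if_common_subset[of S X R T] R(1,3) by simp
qed

lemma RL_good_on_fixed_length:
  fixes a :: "nat \<Rightarrow> nat set list"
  assumes "\<forall>i. a i \<in> RL M" "infinite {i. length (a i) = N}"
  shows "\<exists>i j. i < j \<and> rl_le (a i) (a j)"
proof -
  define w where "w i = column_word (M * card (hd (a i))) (a i)" for i
  have "set (w i) \<subseteq> Pow {..<N}" if "i \<in> {i. length (a i) = N}" for i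
    using set_column_word[of "M * card (hd (a i))" "a i"] that by (simp add: w_def)
  then obtain i j where ij: "length (a i) = N" "length (a j) = N" "i < j" "subseq (w i) (w j)"
    using higman_on[of "Pow {..<N}" "{i. length (a i) = N}" w] assms(2) by auto
  have "\<forall>A\<in>set (a i). A \<subseteq> {1..M * card (hd (a i))}"
    using RL_rows[of "a i" M] assms(1) by blast
  then have "rl_le (a i) (a j)"
    using rl_le_if_subseq_column_word ij(1,2,4) unfolding w_def by simp
  with ij(3) show ?thesis by blast
qed

lemma RL_good_on_fixed_row_size:
  fixes a :: "nat \<Rightarrow> nat set list"
  assumes "\<forall>i. a i \<in> RL M" "infinite {i. card (hd (a i)) = d}"
  shows "\<exists>i j. i < j \<and> rl_le (a i) (a j)"
proof -
  have "set (a i) \<subseteq> Pow {1..M * d}" if "i \<in> {i. card (hd (a i)) = d}" for i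
    using RL_rows[of "a i" M] assms(1) that by auto
  then obtain i j where "i < j" "subseq (a i) (a j)"
    using higman_on[of "Pow {1..M * d}" "{i. card (hd (a i)) = d}" a] assms(2) by auto
  then show ?thesis using rl_le_if_subseq by blast
qed

lemma finite_less_if_finite_fibres:
  assumes "\<And>n. finite {i. f i = n}"
  shows "finite {i. f i < (K :: nat)}"
proof -
  have "{i. f i < K} = (\<Union>n<K. {i. f i = n})" by auto
  then show ?thesis using assms by simp
qed

lemma RL_good_on_unbounded_length_and_row_size:
  fixes a :: "nat \<Rightarrow> nat set list"
  assumes RL: "\<forall>i. a i \<in> RL M"
    and "\<And>N. finite {i. length (a i) = N}" "\<And>d. finite {i. card (hd (a i)) = d}"
  shows "\<exists>j. j \<noteq> 0 \<and> rl_le (a 0) (a j)"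
proof -
  define L where "L = M * card (hd (a 0))"
  let ?small = "{i. length (a i) < length (a 0) * (2 * M) ^ L} \<union> {i. card (hd (a i)) < 2 * L}"
  have "finite (insert 0 ?small)"
    using finite_less_if_finite_fibres[of "\<lambda>i. length (a i)", OF assms(2)]
      finite_less_if_finite_fibres[of "\<lambda>i. card (hd (a i))", OF assms(3)] by simp
  then obtain j where "j \<notin> insert 0 ?small"
    using ex_new_if_finite[OF infinite_UNIV_nat] by blast
  then have "j \<noteq> 0" "2 * L \<le> card (hd (a j))" "length (a 0) * (2 * M) ^ L \<le> length (a j)"
    by (simp_all add: not_less)
  moreover from this(2,3) have "rl_le (a 0) (a j)"
    using RL unfolding L_def by (intro rl_le_if_long_and_wide) simp_all
  ultimately show ?thesis by blast
qed

theorem mainTheorem7: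
  fixes M :: nat
  shows "\<not> (\<exists>a :: nat \<Rightarrow> nat set list.
              (\<forall>i. a i \<in> RL M) \<and> (\<forall>i j. i \<noteq> j \<longrightarrow> \<not> rl_le (a i) (a j)))"
proof
  assume "\<exists>a :: nat \<Rightarrow> nat set list.
              (\<forall>i. a i \<in> RL M) \<and> (\<forall>i j. i \<noteq> j \<longrightarrow> \<not> rl_le (a i) (a j))"
  then obtain a :: "nat \<Rightarrow> nat set list" where RL: "\<forall>i. a i \<in> RL M"
    and antichain: "\<forall>i j. i \<noteq> j \<longrightarrow> \<not> rl_le (a i) (a j)"
    by blast
  consider N where "infinite {i. length (a i) = N}" | d where "infinite {i. card (hd (a i)) = d}"
    | "\<And>N. finite {i. length (a i) = N}" "\<And>d. finite {i. card (hd (a i)) = d}"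
    by blast
  then obtain i j where "i \<noteq> j" "rl_le (a i) (a j)"
  proof cases
    case 1
    then obtain i j where "i < j" "rl_le (a i) (a j)"
      using RL_good_on_fixed_length[OF RL] by blast
    then show ?thesis using that[of i j] by simp
  next
    case 2
    then obtain i j where "i < j" "rl_le (a i) (a j)"
      using RL_good_on_fixed_row_size[OF RL] by blast
    then show ?thesis using that[of i j] by simp
  next
    case 3
    then obtain j where "j \<noteq> 0" "rl_le (a 0) (a j)"
      using RL_good_on_unbounded_length_and_row_size[OF RL] by blast
    then show ?thesis using that[of 0 j] by simp
  qed
  with antichain[rule_format, of i j] show False by simp
qed

end
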